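(* For a positive integer $n$, let $f(n)$ be the maximum value of $\operatorname{Re}\big(\sum_{\xi \in S} \xi\big)$ over all subsets $S$ of the set of $n$-th roots of unity. Then $f(n) \le n/3$ for all $n \ge 3$, and $\lim_{n \to \infty} \frac{f(n)}{n} = \frac{1}{\pi}$. *)

theory Defs
  imports "HOL-Analysis.Analysis"
begin

definition roots_of_unity :: "nat \<Rightarrow> complex set" where
  "roots_of_unity n = {z. z ^ n = 1}"

definition max_root_sum :: "nat \<Rightarrow> real" where
  "max_root_sum n = Max {Re (\<Sum>\<xi>\<in>S. \<xi>) | S. S \<subseteq> roots_of_unity n}"

end

theory Submission
  imports Defs "HOL-Real_Asymp.Real_Asymp"
begin

text \<open>
  The maximum is attained by taking exactly the roots with positive real part, so
  f(n) is the sum of max 0 (cos (2 pi k / n)) over k < n. These are the roots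
  cis (2 pi k / n) with k or n - k at most M = (n - 1) div 4, and the Dirichlet kernel sums
  them: sin (pi / n) f(n) = sin ((2M + 1) pi / n). That angle lies within pi / n of pi / 2,
  so cot (pi / n) \<le> f(n) \<le> 1 / sin (pi / n), and both bounds are n / pi + o(n).
  For n \<ge> 7 the upper bound is at most n / 3 because sin x \<ge> x - x^3 / 6; the cases
  n \<le> 6 are evaluated exactly, f(5) being the golden ratio.
\<close>

lemma Max_Re_sum_subsets:
  fixes R :: "complex set"
  assumes "finite R"
  shows "Max {Re (\<Sum>\<xi>\<in>S. \<xi>) | S. S \<subseteq> R} = (\<Sum>z\<in>R. max 0 (Re z))"
proof (rule Max_eqI)
  have "{Re (\<Sum>\<xi>\<in>S. \<xi>) | S. S \<subseteq> R} = (\<lambda>S. Re (\<Sum>\<xi>\<in>S. \<xi>)) ` Pow R"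
    by auto
  then show "finite {Re (\<Sum>\<xi>\<in>S. \<xi>) | S. S \<subseteq> R}"
    using assms by simp
next
  fix y assume "y \<in> {Re (\<Sum>\<xi>\<in>S. \<xi>) | S. S \<subseteq> R}"
  then obtain S where S: "S \<subseteq> R" "y = Re (\<Sum>\<xi>\<in>S. \<xi>)"
    by auto
  have "y = (\<Sum>z\<in>S. Re z)"
    using S by (simp add: Re_sum)
  also have "\<dots> \<le> (\<Sum>z\<in>S. max 0 (Re z))"
    by (intro sum_mono) auto
  also have "\<dots> \<le> (\<Sum>z\<in>R. max 0 (Re z))"
    using S assms by (intro sum_mono2) auto
  finally show "y \<le> (\<Sum>z\<in>R. max 0 (Re z))" .
next
  have "(\<Sum>z\<in>R. max 0 (Re z)) = (\<Sum>z\<in>R. if Re z > 0 then Re z else 0)"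
    by (intro sum.cong) auto
  also have "\<dots> = (\<Sum>z\<in>{z\<in>R. Re z > 0}. Re z)"
    using assms by (simp add: sum.inter_filter)
  also have "\<dots> = Re (\<Sum>\<xi>\<in>{z\<in>R. Re z > 0}. \<xi>)"
    by (simp add: Re_sum)
  finally show "(\<Sum>z\<in>R. max 0 (Re z)) \<in> {Re (\<Sum>\<xi>\<in>S. \<xi>) | S. S \<subseteq> R}"
    by blast
qed

lemma sin_half_mult_Dirichlet_kernel:
  fixes x :: real
  shows "sin (x / 2) * (1 + 2 * (\<Sum>k=1..m. cos (real k * x))) = sin ((2 * real m + 1) * x / 2)"
proof (induction m)
  case (Suc m)
  have "sin ((2 * real (Suc m) + 1) * x / 2) - sin ((2 * real m + 1) * x / 2)
      = 2 * sin (x / 2) * cos (real (Suc m) * x)"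
    by (simp add: sin_diff_sin algebra_simps add_divide_distrib)
  then show ?case
    using Suc by (simp add: algebra_simps)
qed simp

lemma cos_le_sin_near_pi_half:
  fixes \<theta> \<delta> :: real
  assumes "\<bar>\<theta> - pi / 2\<bar> \<le> \<delta>" "\<delta> \<le> pi"
  shows "cos \<delta> \<le> sin \<theta>"
proof -
  have "cos \<delta> \<le> cos \<bar>\<theta> - pi / 2\<bar>"
    using assms by (intro cos_monotone_0_pi_le) auto
  also have "\<dots> = sin \<theta>"
    by (simp add: cos_diff)
  finally show ?thesis .
qed

lemma x_minus_cube_div_6_le_sin:
  fixes x :: real
  assumes "0 \<le> x" "x \<le> pi"
  shows "x - x ^ 3 / 6 \<le> sin x"
proof (cases "x = 0")
  case False
  then obtain t where t: "0 < t" "t < x"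
    and sin_x: "sin x = (\<Sum>m<4. sin_coeff m * x ^ m) + sin (t + 1/2 * real 4 * pi) / fact 4 * x ^ 4"
    using Maclaurin_sin_expansion3[of 4 x] assms by auto
  have "(\<Sum>m<4. sin_coeff m * x ^ m) = x - x ^ 3 / 6"
    by (simp add: lessThan_nat_numeral sin_coeff_def fact_numeral)
  moreover have "0 \<le> sin (t + 1/2 * real 4 * pi)"
    using t assms by (simp add: sin_ge_zero)
  ultimately show ?thesis
    using sin_x by simp
qed simp

lemma three_div_le_sin_pi_div:
  assumes "n \<ge> 7"
  shows "3 / real n \<le> sin (pi / real n)"
proof -
  have n: "49 \<le> real n ^ 2"
    using power_mono[of 7 "real n" 2] assms by simp
  have pi: "157 / 50 \<le> pi" "pi \<le> 63 / 20"
    using pi_approx by simp_all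
  have "pi ^ 3 \<le> (63 / 20) ^ 3"
    using pi by (intro power_mono) auto
  also have "(63 / 20 :: real) ^ 3 \<le> 313 / 10"
    by (simp add: power3_eq_cube)
  also have "\<dots> \<le> 49 * (6 * pi - 18)"
    using pi by simp
  also have "\<dots> \<le> real n ^ 2 * (6 * pi - 18)"
    using n pi by (intro mult_right_mono) auto
  finally have "3 / real n \<le> pi / real n - (pi / real n) ^ 3 / 6"
    using assms by (simp add: field_simps power3_eq_cube power2_eq_square)
  also have "\<dots> \<le> sin (pi / real n)"
    using assms by (intro x_minus_cube_div_6_le_sin) (auto simp: field_simps)
  finally show ?thesis .
qed

lemma cos_pi_div_5: "cos (pi / 5) = (1 + sqrt 5) / 4"
proof -
  define c where "c = cos (pi / 5)"
  have "4 * c ^ 3 - 3 * c = cos (3 * (pi / 5))"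
    unfolding c_def by (rule cos_treble_cos[symmetric])
  also have "\<dots> = - cos (2 * (pi / 5))"
    using cos_pi_minus[of "2 * (pi / 5)"] by simp
  also have "\<dots> = 1 - 2 * c ^ 2"
    using cos_double_cos[of "pi / 5"] unfolding c_def by simp
  finally have "(c + 1) * (4 * c ^ 2 - 2 * c - 1) = 0"
    by (simp add: algebra_simps power_numeral_reduce)
  moreover have "c > 1 / 2"
    unfolding c_def using cos_monotone_0_pi[of "pi / 5" "pi / 3"] by (simp add: cos_60)
  ultimately have "4 * c ^ 2 = 2 * c + 1"
    by simp
  then have "(4 * c - 1) ^ 2 = 5"
    by (simp add: power2_eq_square algebra_simps)
  moreover have "4 * c - 1 > 0"
    using \<open>c > 1 / 2\<close> by simp
  ultimately have "4 * c - 1 = sqrt 5"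
    by (metis abs_of_pos real_sqrt_abs)
  then show ?thesis
    unfolding c_def by simp
qed

lemma cos_2pi_frac_pos:
  assumes "4 * k < n"
  shows "cos (2 * pi * real k / real n) > 0"
proof (rule cos_gt_zero_pi)
  have "real (4 * k) < real n"
    using assms by linarith
  then show "2 * pi * real k / real n < pi / 2"
    by (simp add: field_simps)
  have "0 \<le> 2 * pi * real k / real n"
    by simp
  then show "- (pi / 2) < 2 * pi * real k / real n"
    using pi_gt_zero by linarith
qed

lemma cos_2pi_frac_nonpos:
  assumes "n \<le> 4 * k" "4 * k \<le> 3 * n" "n > 0"
  shows "cos (2 * pi * real k / real n) \<le> 0"
proof -
  have "real n \<le> 4 * real k" "4 * real k \<le> 3 * real n"
    using assms(1,2) by linarith+
  then have "- (pi / 2) \<le> 2 * pi * real k / real n - pi" "2 * pi * real k / real n - pi \<le> pi / 2"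
    using assms(3) by (simp_all add: field_simps)
  then have "0 \<le> cos (2 * pi * real k / real n - pi)"
    by (rule cos_ge_zero)
  then show ?thesis
    by simp
qed

lemma cos_2pi_frac_reflect:
  assumes "k \<le> n"
  shows "cos (2 * pi * real (n - k) / real n) = cos (2 * pi * real k / real n)"
proof (cases "n = 0")
  case False
  then have "2 * pi * real (n - k) / real n = 2 * pi - 2 * pi * real k / real n"
    using assms by (simp add: of_nat_diff field_simps)
  then show ?thesis
    by (simp add: cos_diff)
qed (use assms in simp)

lemma max_root_sum_eq_sum_cos:
  assumes "n > 0"
  shows "max_root_sum n = (\<Sum>k<n. max 0 (cos (2 * pi * real k / real n)))"
proof -
  have roots: "bij_betw (\<lambda>k. cis (2 * pi * real k / real n)) {..<n} (roots_of_unity n)"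
    using Complex.bij_betw_roots_unity[OF assms] by (simp add: roots_of_unity_def)
  then have "finite (roots_of_unity n)"
    using bij_betw_finite by blast
  then have "max_root_sum n = (\<Sum>z\<in>roots_of_unity n. max 0 (Re z))"
    unfolding max_root_sum_def by (rule Max_Re_sum_subsets)
  also have "\<dots> = (\<Sum>k<n. max 0 (Re (cis (2 * pi * real k / real n))))"
    by (rule sum.reindex_bij_betw[OF roots, symmetric])
  finally show ?thesis
    by simp
qed

lemma max_0_cos_2pi_frac_split:
  fixes n k :: nat
  defines "M \<equiv> (n - 1) div 4"
  assumes "k < n"
  shows "max 0 (cos (2 * pi * real k / real n)) =
     (if k \<le> M then cos (2 * pi * real k / real n) else 0) +
     (if n - M \<le> k then cos (2 * pi * real k / real n) else 0)"
proof -
  have M: "4 * M \<le> n - 1" "n \<le> 4 * M + 4"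
    unfolding M_def by auto
  consider "k \<le> M" | "n - M \<le> k" | "M < k" "k < n - M"
    by linarith
  then show ?thesis
  proof cases
    case 1
    then have "4 * k < n"
      using M assms by linarith
    then show ?thesis
      using cos_2pi_frac_pos[of k n] 1 M by auto
  next
    case 2
    then have "4 * (n - k) < n" "\<not> k \<le> M"
      using M assms by linarith+
    then show ?thesis
      using cos_2pi_frac_pos[of "n - k" n] cos_2pi_frac_reflect[of k n] 2 assms by auto
  next
    case 3
    then have "n \<le> 4 * k" "4 * k \<le> 3 * n"
      using M assms by linarith+
    then show ?thesis
      using cos_2pi_frac_nonpos[of n k] 3 assms by auto
  qed
qed

lemma sum_max_0_cos_2pi_frac:
  assumes "n > 0"
  shows "(\<Sum>k<n. max 0 (cos (2 * pi * real k / real n))) =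
     1 + 2 * (\<Sum>k=1..(n - 1) div 4. cos (real k * (2 * pi / real n)))"
proof -
  define M where "M = (n - 1) div 4"
  let ?c = "\<lambda>k::nat. cos (2 * pi * real k / real n)"
  have M: "2 * M < n"
    using assms unfolding M_def by auto
  have "(\<Sum>k<n. max 0 (?c k)) =
      (\<Sum>k<n. if k \<le> M then ?c k else 0) + (\<Sum>k<n. if n - M \<le> k then ?c k else 0)"
    unfolding M_def by (simp add: max_0_cos_2pi_frac_split sum.distrib)
  also have "(\<Sum>k<n. if k \<le> M then ?c k else 0) = (\<Sum>k\<in>{k\<in>{..<n}. k \<le> M}. ?c k)"
    by (rule sum.inter_filter[symmetric]) simp
  also have "{k\<in>{..<n}. k \<le> M} = {0..M}"
    using M by auto
  also have "(\<Sum>k<n. if n - M \<le> k then ?c k else 0) = (\<Sum>k\<in>{k\<in>{..<n}. n - M \<le> k}. ?c k)"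
    by (rule sum.inter_filter[symmetric]) simp
  also have "{k\<in>{..<n}. n - M \<le> k} = (\<lambda>j. n - j) ` {1..M}"
  proof (intro set_eqI iffI)
    fix k assume "k \<in> {k\<in>{..<n}. n - M \<le> k}"
    then have "n - k \<in> {1..M}" "k = n - (n - k)"
      by auto
    then show "k \<in> (\<lambda>j. n - j) ` {1..M}"
      by blast
  qed (use M in auto)
  also have "(\<Sum>k\<in>(\<lambda>j. n - j) ` {1..M}. ?c k) = (\<Sum>j\<in>{1..M}. ?c (n - j))"
    using M by (subst sum.reindex) (auto simp: inj_on_def)
  also have "\<dots> = (\<Sum>j\<in>{1..M}. ?c j)"
    using M by (intro sum.cong refl cos_2pi_frac_reflect) auto
  also have "(\<Sum>k\<in>{0..M}. ?c k) = 1 + (\<Sum>k\<in>{1..M}. ?c k)"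
    by (simp add: sum.atLeast_Suc_atMost)
  finally show ?thesis
    unfolding M_def by (simp add: algebra_simps)
qed

lemma sin_pi_div_mult_max_root_sum:
  assumes "n > 0"
  shows "sin (pi / real n) * max_root_sum n = sin ((2 * real ((n - 1) div 4) + 1) * pi / real n)"
  using sin_half_mult_Dirichlet_kernel[of "2 * pi / real n" "(n - 1) div 4"]
  by (simp add: max_root_sum_eq_sum_cos sum_max_0_cos_2pi_frac assms)

lemma max_root_sum_eq_sin_div:
  assumes "n \<ge> 2"
  shows "max_root_sum n = sin ((2 * real ((n - 1) div 4) + 1) * pi / real n) / sin (pi / real n)"
  using sin_pi_div_mult_max_root_sum[of n] sin_pi_divide_n_gt_0[OF assms] assms
  by (simp add: field_simps)

lemma max_root_sum_bounds:
  assumes "n \<ge> 2"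
  shows "cos (pi / real n) / sin (pi / real n) \<le> max_root_sum n"
    and "max_root_sum n \<le> 1 / sin (pi / real n)"
proof -
  define M where "M = (n - 1) div 4"
  have "\<bar>4 * real M + 2 - real n\<bar> \<le> 2"
    using assms unfolding M_def by linarith
  then have "\<bar>4 * real M + 2 - real n\<bar> * (pi / (2 * real n)) \<le> 2 * (pi / (2 * real n))"
    by (intro mult_right_mono) auto
  moreover have "(2 * real M + 1) * pi / real n - pi / 2 = (4 * real M + 2 - real n) * (pi / (2 * real n))"
    using assms by (simp add: field_simps)
  ultimately have "\<bar>(2 * real M + 1) * pi / real n - pi / 2\<bar> \<le> pi / real n"
    by (simp add: abs_mult)
  then have "cos (pi / real n) \<le> sin ((2 * real M + 1) * pi / real n)"
    using assms by (intro cos_le_sin_near_pi_half) (auto simp: field_simps)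
  then show "cos (pi / real n) / sin (pi / real n) \<le> max_root_sum n"
    using max_root_sum_eq_sin_div[OF assms] sin_pi_divide_n_gt_0[OF assms]
    unfolding M_def by (simp add: divide_right_mono)
  show "max_root_sum n \<le> 1 / sin (pi / real n)"
    using max_root_sum_eq_sin_div[OF assms] sin_pi_divide_n_gt_0[OF assms]
    by (simp add: divide_right_mono)
qed

lemma LIMSEQ_max_root_sum_div: "(\<lambda>n. max_root_sum n / real n) \<longlonglongrightarrow> 1 / pi"
proof (rule tendsto_sandwich)
  show "(\<lambda>n. cos (pi / real n) / (real n * sin (pi / real n))) \<longlonglongrightarrow> 1 / pi"
    unfolding inverse_eq_divide[symmetric] by real_asymp
  show "(\<lambda>n. 1 / (real n * sin (pi / real n))) \<longlonglongrightarrow> 1 / pi"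
    unfolding inverse_eq_divide[symmetric] by real_asymp
  show "\<forall>\<^sub>F n in sequentially. cos (pi / real n) / (real n * sin (pi / real n)) \<le> max_root_sum n / real n"
  proof (rule eventually_sequentiallyI)
    fix n :: nat assume "n \<ge> 2"
    then have "cos (pi / real n) / sin (pi / real n) / real n \<le> max_root_sum n / real n"
      by (intro divide_right_mono max_root_sum_bounds(1)) auto
    then show "cos (pi / real n) / (real n * sin (pi / real n)) \<le> max_root_sum n / real n"
      by (simp add: mult.commute)
  qed
  show "\<forall>\<^sub>F n in sequentially. max_root_sum n / real n \<le> 1 / (real n * sin (pi / real n))"
  proof (rule eventually_sequentiallyI)
    fix n :: nat assume "n \<ge> 2"
    then have "max_root_sum n / real n \<le> 1 / sin (pi / real n) / real n"
      by (intro divide_right_mono max_root_sum_bounds(2)) auto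
    then show "max_root_sum n / real n \<le> 1 / (real n * sin (pi / real n))"
      by (simp add: mult.commute)
  qed
qed

lemma max_root_sum_5: "max_root_sum 5 = (1 + sqrt 5) / 2"
proof -
  have "sin (3 * pi / 5) = sin (2 * (pi / 5))"
    using sin_pi_minus[of "2 * (pi / 5)"] by simp
  also have "\<dots> = sin (pi / 5) * (2 * cos (pi / 5))"
    using sin_double[of "pi / 5"] by simp
  also have "\<dots> = sin (pi / 5) * ((1 + sqrt 5) / 2)"
    by (simp add: cos_pi_div_5)
  finally show ?thesis
    using max_root_sum_eq_sin_div[of 5] sin_pi_divide_n_gt_0[of 5] by simp
qed

lemma max_root_sum_le_third:
  assumes "n \<ge> 3"
  shows "max_root_sum n \<le> real n / 3"
proof (cases "n \<ge> 7")
  case True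
  have "max_root_sum n \<le> 1 / sin (pi / real n)"
    using True by (intro max_root_sum_bounds(2)) auto
  also have "\<dots> \<le> real n / 3"
    using three_div_le_sin_pi_div[OF True] sin_pi_divide_n_gt_0[of n] True by (simp add: field_simps)
  finally show ?thesis .
next
  case False
  then have "n = 3 \<or> n = 4 \<or> n = 5 \<or> n = 6"
    using assms by auto
  moreover have "sqrt 5 \<le> 7 / 3"
    by (rule real_le_lsqrt) (simp_all add: power2_eq_square)
  ultimately show ?thesis
    by (auto simp: max_root_sum_5 max_root_sum_eq_sin_div sin_30)
qed

theorem lemma3p8:
  shows "(\<forall>n::nat. n \<ge> 3 \<longrightarrow> max_root_sum n \<le> real n / 3)
         \<and> ((\<lambda>n. max_root_sum n / real n) \<longlonglongrightarrow> 1 / pi)"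
  using max_root_sum_le_third LIMSEQ_max_root_sum_div by blast

end
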